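(* Let $\lambda$ be an infinite cardinal, $\theta$ an infinite regular cardinal and $\chi$ either $2$ or an infinite cardinal. Suppose that $m(\lambda,\lambda,\theta,\chi)=\lambda$. Then for every map $d:\lambda^+\times\lambda^+\to\lambda$, $A(d)\cap E^{\lambda^+}_\theta\in J_\chi[\lambda^+]$.
   Context: $E^\kappa_\theta=\{\alpha<\kappa\mid\mathrm{cf}(\alpha)=\theta\}$. For a map $d:\delta\times\kappa\to\lambda$, $A(d)$ is the set of all $\alpha<\kappa$ such that for every cofinal $B\subseteq\alpha$ there exist $\eta\in\delta\cap\alpha$ and a cofinal $B'\subseteq B$ on which $\beta\mapsto d(\eta,\beta)$ is injective. $m(\lambda,\lambda,\theta,\chi)$ is the least size of a family $\mathcal H$ of functions from $\lambda$ to $[\lambda]^{<\chi}$ such that for every $X\in[\lambda]^\theta$ and every $g:X\to\lambda$ there is $h\in\mathcal H$ with $|\{\xi\in X\mid g(\xi)\in h(\xi)\}|=\theta$. For regular uncountable $\kappa$, $J_\chi[\kappa]$ is the collection of all $S\subseteq\kappa$ for which there exist a club $C\subseteq\kappa$ and functions $f_i:\kappa\to[\kappa]^{<\chi}$ ($i<\kappa$) such that for every $\alpha\in S\cap C$, every regressive $f:\alpha\to\alpha$ and every cofinal $B\subseteq\alpha$, there is $i<\alpha$ with $\sup\{\beta\in B\mid f(\beta)\in f_i(\beta)\}=\alpha$. *)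

theory Defs
  imports Main "HOL-Library.FuncSet"
begin

(* Cardinals/ordinals are represented by well-order relations (HOL's BNF cardinal library).
   For a cardinal K (a Card_order relation), ordinals alpha < K are the elements of Field K;
   the ordinal alpha is identified with the set underS K alpha of its predecessors. *)

definition sup_is :: "'k rel \<Rightarrow> 'k set \<Rightarrow> 'k \<Rightarrow> bool" where
  "sup_is K B \<alpha> \<longleftrightarrow> (\<forall>\<gamma>\<in>underS K \<alpha>. \<exists>\<beta>\<in>B. (\<gamma>, \<beta>) \<in> K \<and> \<gamma> \<noteq> \<beta>)"

definition cofinal_sub :: "'k rel \<Rightarrow> 'k set \<Rightarrow> 'k \<Rightarrow> bool" where
  "cofinal_sub K B \<alpha> \<longleftrightarrow> B \<subseteq> underS K \<alpha> \<and> sup_is K B \<alpha>"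

definition cf_is :: "'k rel \<Rightarrow> 'k \<Rightarrow> 't rel \<Rightarrow> bool" where
  "cf_is K \<alpha> T \<longleftrightarrow>
     (\<exists>B. cofinal_sub K B \<alpha> \<and> (card_of B, T) \<in> ordIso) \<and>
     (\<forall>B. cofinal_sub K B \<alpha> \<longrightarrow> (T, card_of B) \<in> ordLeq)"

definition E_cof :: "'k rel \<Rightarrow> 't rel \<Rightarrow> 'k set" where
  "E_cof K T = {\<alpha> \<in> Field K. cf_is K \<alpha> T}"

definition small_subsets :: "'a set \<Rightarrow> 'c rel \<Rightarrow> 'a set set" where
  "small_subsets X C = {Y. Y \<subseteq> X \<and> (card_of Y, C) \<in> ordLess}"

(* A(d) for d : delta x kappa -> lambda, here delta = kappa *)
definition A_set :: "'k rel \<Rightarrow> ('k \<Rightarrow> 'k \<Rightarrow> 'a) \<Rightarrow> 'k set" where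
  "A_set K d = {\<alpha> \<in> Field K. \<forall>B. cofinal_sub K B \<alpha> \<longrightarrow>
      (\<exists>\<eta>\<in>underS K \<alpha>. \<exists>B'. B' \<subseteq> B \<and> cofinal_sub K B' \<alpha> \<and> inj_on (\<lambda>\<beta>. d \<eta> \<beta>) B')}"

(* the covering property in the definition of m(lambda,lambda,theta,chi) *)
definition m_covers :: "'a rel \<Rightarrow> 't rel \<Rightarrow> 'c rel \<Rightarrow> ('a \<Rightarrow> 'a set) set \<Rightarrow> bool" where
  "m_covers L T C H \<longleftrightarrow>
     H \<subseteq> (Field L \<rightarrow>\<^sub>E small_subsets (Field L) C) \<and>
     (\<forall>X g. X \<subseteq> Field L \<and> (card_of X, T) \<in> ordIso \<and> g \<in> X \<rightarrow> Field L \<longrightarrow>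
        (\<exists>h\<in>H. (card_of {\<xi>\<in>X. g \<xi> \<in> h \<xi>}, T) \<in> ordIso))"

definition m_equals :: "'a rel \<Rightarrow> 't rel \<Rightarrow> 'c rel \<Rightarrow> bool" where
  "m_equals L T C \<longleftrightarrow>
     (\<exists>H. m_covers L T C H \<and> (card_of H, L) \<in> ordIso) \<and>
     (\<forall>H. m_covers L T C H \<longrightarrow> (L, card_of H) \<in> ordLeq)"

definition club :: "'k rel \<Rightarrow> 'k set \<Rightarrow> bool" where
  "club K D \<longleftrightarrow> D \<subseteq> Field K \<and>
     (\<forall>\<gamma>\<in>Field K. \<exists>\<delta>\<in>D. (\<gamma>, \<delta>) \<in> K) \<and>
     (\<forall>\<alpha>\<in>Field K. underS K \<alpha> \<noteq> {} \<and> sup_is K (D \<inter> underS K \<alpha>) \<alpha> \<longrightarrow> \<alpha> \<in> D)"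

definition J_ideal :: "'k rel \<Rightarrow> 'c rel \<Rightarrow> 'k set set" where
  "J_ideal K C = {S. S \<subseteq> Field K \<and>
     (\<exists>D F. club K D \<and>
        (\<forall>i\<in>Field K. F i \<in> Field K \<rightarrow> small_subsets (Field K) C) \<and>
        (\<forall>\<alpha>\<in>S \<inter> D. \<forall>f B.
            (\<forall>\<beta>\<in>underS K \<alpha>. f \<beta> \<in> underS K \<alpha> \<and> (underS K \<beta> \<noteq> {} \<longrightarrow> f \<beta> \<in> underS K \<beta>)) \<and>
            cofinal_sub K B \<alpha> \<longrightarrow>
            (\<exists>i\<in>underS K \<alpha>. sup_is K {\<beta>\<in>B. f \<beta> \<in> F i \<beta>} \<alpha>)))}"

end

(* Write kappa for lambda^+. Fix an injective coding p : kappa x lambda -> kappa, an enumeration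
   (h_j)_{j < lambda} of a covering family witnessing m(lambda, lambda, theta, chi) = lambda, and
   injections e_beta : beta -> lambda. The guessing sets are
     F_{p(eta, j)}(beta) = e_beta^-1 [h_j (d (eta, beta))],
   of size < chi, and the club consists of the closure points of p.
   Given alpha in A(d) of cofinality theta in the club, f regressive and B cofinal in alpha, first thin
   B to a cofinal subset all of whose proper initial segments have size < theta, then use alpha in A(d)
   to get eta < alpha and a cofinal B' of size theta inside it on which d(eta, -) is injective.
   Covering the function d(eta, beta) |-> e_beta (f beta) on the theta-sized set d(eta, -)[B'] gives
   j with f beta in F_{p(eta, j)}(beta) for theta many beta in B'. These are cofinal in alpha because
   the initial segments of B' are small, and p(eta, j) < alpha because alpha is a closure point. *)

theory Submission
  imports Defs
begin

unbundle cardinal_syntax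

context wo_rel
begin

lemma le_underS_trans: "(a, b) \<in> r \<Longrightarrow> b \<in> underS c \<Longrightarrow> a \<in> underS c"
  using TRANS ANTISYM unfolding underS_def trans_def antisym_def by blast

lemma underS_trans: "a \<in> underS b \<Longrightarrow> b \<in> underS c \<Longrightarrow> a \<in> underS c"
  using le_underS_trans unfolding underS_def by blast

lemma not_underS_le: "a \<in> Field r \<Longrightarrow> b \<in> Field r \<Longrightarrow> a \<notin> underS b \<Longrightarrow> (b, a) \<in> r"
  using TOTALS REFL unfolding underS_def refl_on_def by blast

end

lemma sup_is_iff: "sup_is K B \<alpha> \<longleftrightarrow> (\<forall>\<gamma>\<in>underS K \<alpha>. \<exists>\<beta>\<in>B. \<gamma> \<in> underS K \<beta>)"
  unfolding sup_is_def underS_def by blast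

lemma card_of_empty_ordLess:
  assumes "Card_order C" "Field C \<noteq> {}"
  shows "|{}| <o C"
proof -
  obtain c where "c \<in> Field C"
    using assms(2) by blast
  have "\<not> |{c}| \<le>o |{}|"
    using card_of_empty3[of "{c}"] by blast
  then have empty_singl: "|{}| <o |{c}|"
    using not_ordLeq_iff_ordLess[OF card_of_Well_order card_of_Well_order] by blast
  show ?thesis
    by (rule ordLess_ordLeq_trans[OF empty_singl Card_order_singl_ordLeq[OF assms]])
qed

lemma card_of_range_nat_ordLeq:
  fixes g :: "nat \<Rightarrow> 'b"
  assumes L: "Card_order L" "\<not> finite (Field L)"
  shows "|range g| \<le>o L"
proof -
  have "|range g| \<le>o |UNIV :: nat set|"
    by (rule card_of_image)
  also have "|UNIV :: nat set| \<le>o |Field L|"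
    using L(2) infinite_iff_card_of_nat by blast
  also have "|Field L| =o L"
    by (rule card_of_Field_ordIso[OF L(1)])
  finally show ?thesis .
qed

section \<open>Successor cardinals\<close>

lemma card_of_underS_cardSuc:
  assumes "Card_order L"
  shows "|underS (cardSuc L) \<beta>| \<le>o L"
proof (cases "\<beta> \<in> Field (cardSuc L)")
  case True
  then have "|underS (cardSuc L) \<beta>| <o cardSuc L"
    by (rule card_of_underS[OF cardSuc_Card_order[OF assms]])
  then show ?thesis
    using cardSuc_ordLeq_ordLess[OF assms card_of_Card_order[of "underS (cardSuc L) \<beta>"]] by blast
next
  case False
  then show ?thesis
    using Card_order_empty[OF assms] by (simp add: underS_empty)
qed

lemma cardSuc_small_subset_bounded:
  assumes L: "Card_order L" "\<not> finite (Field L)"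
    and S: "S \<subseteq> Field (cardSuc L)" "|S| \<le>o L"
  shows "\<exists>\<delta>\<in>Field (cardSuc L). S \<subseteq> underS (cardSuc L) \<delta>"
proof -
  let ?K = "cardSuc L"
  have K: "Card_order ?K"
    by (rule cardSuc_Card_order[OF L(1)])
  have K_inf: "\<not> finite (Field ?K)"
    using cardSuc_finite[OF L(1)] L(2) by simp
  interpret K: wo_rel ?K
    by (rule Card_order_wo_rel[OF K])
  have "relChain ?K (underS ?K)"
    unfolding relChain_def using underS_incr[OF K.TRANS K.ANTISYM] by blast
  moreover have "Field ?K \<subseteq> (\<Union>\<delta>\<in>Field ?K. underS ?K \<delta>)"
  proof
    fix a assume a: "a \<in> Field ?K"
    have "Field ?K \<noteq> under ?K a"
      using Card_order_infinite_not_under[OF K K_inf] by blast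
    then obtain b where b: "b \<in> Field ?K" "b \<notin> under ?K a"
      using under_Field[of ?K a] by blast
    have "(a, b) \<in> ?K"
      using K.not_underS_le[OF b(1) a] b(2) underS_subset_under by fast
    moreover have "a \<noteq> b"
      using b(2) Refl_under_in[OF K.REFL a] by blast
    ultimately have "a \<in> underS ?K b"
      unfolding underS_def by blast
    then show "a \<in> (\<Union>\<delta>\<in>Field ?K. underS ?K \<delta>)"
      using b(1) by blast
  qed
  ultimately show ?thesis
    using cardSuc_UNION[OF L _ _ S(2)] S(1) by blast
qed

lemma cardSuc_small_subset_sup:
  assumes L: "Card_order L" "\<not> finite (Field L)"
    and S: "S \<subseteq> Field (cardSuc L)" "|S| \<le>o L"
  obtains \<delta> where "\<delta> \<in> Field (cardSuc L)" "\<forall>s\<in>S. (s, \<delta>) \<in> cardSuc L"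
    "\<forall>\<eta>\<in>underS (cardSuc L) \<delta>. \<exists>s\<in>S. \<eta> \<in> underS (cardSuc L) s"
proof -
  let ?K = "cardSuc L"
  interpret K: wo_rel ?K
    by (rule Card_order_wo_rel[OF cardSuc_Card_order[OF L(1)]])
  define U where "U = {u \<in> Field ?K. \<forall>s\<in>S. (s, u) \<in> ?K}"
  have U: "U \<subseteq> Field ?K"
    unfolding U_def by blast
  obtain \<delta>0 where "\<delta>0 \<in> Field ?K" "S \<subseteq> underS ?K \<delta>0"
    using cardSuc_small_subset_bounded[OF L S] by blast
  then have "U \<noteq> {}"
    unfolding U_def underS_def by blast
  then have min: "K.minim U \<in> U" and least: "\<And>u. u \<in> U \<Longrightarrow> (K.minim U, u) \<in> ?K"
    using K.minim_in[OF U] K.minim_least[OF U] by auto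
  have "\<exists>s\<in>S. \<eta> \<in> underS ?K s" if \<eta>: "\<eta> \<in> underS ?K (K.minim U)" for \<eta>
  proof (rule ccontr)
    assume "\<not> ?thesis"
    moreover have "\<eta> \<in> Field ?K"
      using \<eta> underS_Field by fast
    ultimately have "\<eta> \<in> U"
      using K.not_underS_le S(1) unfolding U_def by blast
    then have "K.minim U \<in> underS ?K (K.minim U)"
      using K.le_underS_trans[OF least \<eta>] by blast
    then show False
      by (simp add: underS_notIn)
  qed
  then show ?thesis
    using that min unfolding U_def by blast
qed

lemma cardSuc_UNION_underS_bounded:
  assumes L: "Card_order L" "\<not> finite (Field L)"
    and G: "\<And>\<eta>. \<eta> \<in> Field (cardSuc L) \<Longrightarrow> G \<eta> \<subseteq> Field (cardSuc L) \<and> |G \<eta>| \<le>o L"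
  shows "\<exists>\<delta>\<in>Field (cardSuc L). (\<Union>\<eta>\<in>underS (cardSuc L) \<beta>. G \<eta>) \<subseteq> underS (cardSuc L) \<delta>"
proof (rule cardSuc_small_subset_bounded[OF L])
  have "\<eta> \<in> underS (cardSuc L) \<beta> \<Longrightarrow> G \<eta> \<subseteq> Field (cardSuc L) \<and> |G \<eta>| \<le>o L" for \<eta>
    using G underS_Field by fast
  then show "(\<Union>\<eta>\<in>underS (cardSuc L) \<beta>. G \<eta>) \<subseteq> Field (cardSuc L)"
    and "|\<Union>\<eta>\<in>underS (cardSuc L) \<beta>. G \<eta>| \<le>o L"
    using card_of_UNION_ordLeq_infinite_Field[OF L(2,1) card_of_underS_cardSuc[OF L(1)]]
    by blast+
qed

lemma cardSuc_closure_point_above: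
  assumes L: "Card_order L" "\<not> finite (Field L)"
    and G: "\<And>\<eta>. \<eta> \<in> Field (cardSuc L) \<Longrightarrow> G \<eta> \<subseteq> Field (cardSuc L) \<and> |G \<eta>| \<le>o L"
    and \<gamma>: "\<gamma> \<in> Field (cardSuc L)"
  obtains \<delta> where "\<delta> \<in> Field (cardSuc L)" "(\<gamma>, \<delta>) \<in> cardSuc L"
    "\<forall>\<eta>\<in>underS (cardSuc L) \<delta>. G \<eta> \<subseteq> underS (cardSuc L) \<delta>"
proof -
  let ?K = "cardSuc L"
  interpret K: wo_rel ?K
    by (rule Card_order_wo_rel[OF cardSuc_Card_order[OF L(1)]])
  obtain c where c: "\<And>\<beta>. c \<beta> \<in> Field ?K"
    "\<And>\<beta>. (\<Union>\<eta>\<in>underS ?K \<beta>. G \<eta>) \<subseteq> underS ?K (c \<beta>)"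
    using cardSuc_UNION_underS_bounded[where G = G, OF L G] by metis
  define g where "g n = (c ^^ n) \<gamma>" for n
  have g_Suc: "g (Suc n) = c (g n)" for n
    unfolding g_def by simp
  have "g n \<in> Field ?K" for n
    by (cases n) (simp_all add: g_def \<gamma> c(1))
  then have "range g \<subseteq> Field ?K"
    by blast
  moreover have "|range g| \<le>o L"
    by (rule card_of_range_nat_ordLeq[OF L])
  ultimately obtain \<delta> where \<delta>: "\<delta> \<in> Field ?K" "\<forall>s\<in>range g. (s, \<delta>) \<in> ?K"
    "\<forall>\<eta>\<in>underS ?K \<delta>. \<exists>s\<in>range g. \<eta> \<in> underS ?K s"
    by (rule cardSuc_small_subset_sup[OF L])
  have "G \<eta> \<subseteq> underS ?K \<delta>" if \<eta>: "\<eta> \<in> underS ?K \<delta>" for \<eta>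
  proof -
    obtain n where "\<eta> \<in> underS ?K (g n)"
      using \<delta>(3) \<eta> by blast
    then have "G \<eta> \<subseteq> underS ?K (g (Suc n))"
      using c(2) unfolding g_Suc by blast
    moreover have "(g (Suc n), \<delta>) \<in> ?K"
      using \<delta>(2) by blast
    ultimately show ?thesis
      using underS_incr[OF K.TRANS K.ANTISYM] by blast
  qed
  moreover have "(\<gamma>, \<delta>) \<in> ?K"
    using \<delta>(2) unfolding g_def by (metis funpow_0 rangeI)
  ultimately show ?thesis
    using that \<delta>(1) by blast
qed

lemma club_closure_points:
  assumes L: "Card_order L" "\<not> finite (Field L)"
    and G: "\<And>\<eta>. \<eta> \<in> Field (cardSuc L) \<Longrightarrow> G \<eta> \<subseteq> Field (cardSuc L) \<and> |G \<eta>| \<le>o L"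
  shows "club (cardSuc L) {\<delta> \<in> Field (cardSuc L). \<forall>\<eta>\<in>underS (cardSuc L) \<delta>. G \<eta> \<subseteq> underS (cardSuc L) \<delta>}"
    (is "club ?K ?D")
proof -
  interpret K: wo_rel ?K
    by (rule Card_order_wo_rel[OF cardSuc_Card_order[OF L(1)]])
  have closed: "\<alpha> \<in> ?D" if \<alpha>: "\<alpha> \<in> Field ?K" "sup_is ?K (?D \<inter> underS ?K \<alpha>) \<alpha>" for \<alpha>
  proof -
    have "G \<eta> \<subseteq> underS ?K \<alpha>" if \<eta>: "\<eta> \<in> underS ?K \<alpha>" for \<eta>
    proof -
      obtain \<delta> where \<delta>: "\<delta> \<in> ?D \<inter> underS ?K \<alpha>" "\<eta> \<in> underS ?K \<delta>"
        using bspec[OF \<alpha>(2)[unfolded sup_is_iff] \<eta>] by (rule bexE)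
      then have "G \<eta> \<subseteq> underS ?K \<delta>"
        by blast
      moreover have "underS ?K \<delta> \<subseteq> underS ?K \<alpha>"
        using K.underS_trans \<delta>(1) by blast
      ultimately show ?thesis
        by blast
    qed
    then show ?thesis
      using \<alpha>(1) by blast
  qed
  have "\<exists>\<delta>\<in>?D. (\<gamma>, \<delta>) \<in> ?K" if "\<gamma> \<in> Field ?K" for \<gamma>
    using cardSuc_closure_point_above[where G = G, OF L G that] by blast
  then show ?thesis
    unfolding club_def using closed by blast
qed

lemma cardSuc_Times_Field_inj:
  assumes L: "Card_order L" "\<not> finite (Field L)"
  obtains p where "inj_on p (Field (cardSuc L) \<times> Field L)"
    "p ` (Field (cardSuc L) \<times> Field L) \<subseteq> Field (cardSuc L)"
proof -
  let ?K = "cardSuc L"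
  have K: "Card_order ?K"
    by (rule cardSuc_Card_order[OF L(1)])
  have K_inf: "\<not> finite (Field ?K)"
    using cardSuc_finite[OF L(1)] L(2) by simp
  have K_iso: "|Field ?K| =o ?K"
    by (rule card_of_Field_ordIso[OF K])
  have "|Field L| \<le>o ?K"
    using ordIso_ordLeq_trans[OF card_of_Field_ordIso[OF L(1)]
        ordLess_imp_ordLeq[OF cardSuc_greater[OF L(1)]]] .
  then have "|Field ?K \<times> Field L| \<le>o ?K"
    using card_of_Times_ordLeq_infinite_Field[OF K_inf ordIso_imp_ordLeq[OF K_iso] _ K] by blast
  then have "|Field ?K \<times> Field L| \<le>o |Field ?K|"
    using ordLeq_ordIso_trans[OF _ ordIso_symmetric[OF K_iso]] by blast
  then show ?thesis
    using that unfolding card_of_ordLeq[symmetric] by blast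
qed

lemma cardSuc_pairing_club:
  assumes L: "Card_order L" "\<not> finite (Field L)"
  obtains p D where "inj_on p (Field (cardSuc L) \<times> Field L)" "club (cardSuc L) D"
    "\<forall>\<delta>\<in>D. \<forall>\<eta>\<in>underS (cardSuc L) \<delta>. \<forall>j\<in>Field L. p (\<eta>, j) \<in> underS (cardSuc L) \<delta>"
proof -
  let ?K = "cardSuc L"
  obtain p where p: "inj_on p (Field ?K \<times> Field L)" "p ` (Field ?K \<times> Field L) \<subseteq> Field ?K"
    by (rule cardSuc_Times_Field_inj[OF L])
  define D where "D = {\<delta> \<in> Field ?K. \<forall>\<eta>\<in>underS ?K \<delta>. (\<lambda>j. p (\<eta>, j)) ` Field L \<subseteq> underS ?K \<delta>}"
  have "club ?K D"
    unfolding D_def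
  proof (rule club_closure_points[OF L])
    fix \<eta> assume "\<eta> \<in> Field ?K"
    then have "(\<lambda>j. p (\<eta>, j)) ` Field L \<subseteq> Field ?K"
      using p(2) by blast
    moreover have "|(\<lambda>j. p (\<eta>, j)) ` Field L| \<le>o L"
      using ordLeq_ordIso_trans[OF card_of_image card_of_Field_ordIso[OF L(1)]] .
    ultimately show "(\<lambda>j. p (\<eta>, j)) ` Field L \<subseteq> Field ?K \<and> |(\<lambda>j. p (\<eta>, j)) ` Field L| \<le>o L"
      by blast
  qed
  moreover have "\<forall>\<delta>\<in>D. \<forall>\<eta>\<in>underS ?K \<delta>. \<forall>j\<in>Field L. p (\<eta>, j) \<in> underS ?K \<delta>"
    unfolding D_def by blast
  ultimately show ?thesis
    using that p(1) by blast
qed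

lemma cardSuc_underS_embeddings:
  assumes "Card_order L"
  obtains e where "\<And>\<beta>. inj_on (e \<beta>) (underS (cardSuc L) \<beta>)"
    "\<And>\<beta>. e \<beta> ` underS (cardSuc L) \<beta> \<subseteq> Field L"
proof -
  have "|underS (cardSuc L) \<beta>| \<le>o |Field L|" for \<beta>
    using ordLeq_ordIso_trans[OF card_of_underS_cardSuc[OF assms]
        ordIso_symmetric[OF card_of_Field_ordIso[OF assms]]] .
  then have ex: "\<forall>\<beta>. \<exists>f. inj_on f (underS (cardSuc L) \<beta>) \<and> f ` underS (cardSuc L) \<beta> \<subseteq> Field L"
    unfolding card_of_ordLeq[symmetric] by blast
  obtain e where "\<forall>\<beta>. inj_on (e \<beta>) (underS (cardSuc L) \<beta>) \<and> e \<beta> ` underS (cardSuc L) \<beta> \<subseteq> Field L"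
    using choice[OF ex] by blast
  then show ?thesis
    using that by blast
qed

section \<open>Thinning cofinal sets\<close>

(* b is strictly increasing on its record points, and anything below a value of b is below a
   record value. *)
definition record_points :: "'k rel \<Rightarrow> 't rel \<Rightarrow> ('t \<Rightarrow> 'k) \<Rightarrow> 't set" where
  "record_points K T b = {t \<in> Field T. \<forall>s\<in>underS T t. b s \<in> underS K (b t)}"

lemma record_points_least_above:
  assumes K: "wo_rel K" and T: "wo_rel T"
    and b: "b ` Field T \<subseteq> Field K" and t: "t \<in> Field T" "\<gamma> \<in> underS K (b t)"
  obtains t0 where "t0 \<in> record_points K T b" "\<gamma> \<in> underS K (b t0)"
proof -
  interpret K: wo_rel K by fact
  interpret T: wo_rel T by fact
  define Q where "Q = {s \<in> Field T. \<gamma> \<in> underS K (b s)}"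
  define t0 where "t0 = T.minim Q"
  have "Q \<subseteq> Field T" "Q \<noteq> {}"
    using t unfolding Q_def by auto
  then have t0: "t0 \<in> Q" and t0_least: "\<And>s. s \<in> Q \<Longrightarrow> (t0, s) \<in> T"
    unfolding t0_def using T.minim_in T.minim_least by auto
  have \<gamma>_K: "\<gamma> \<in> Field K"
    using t(2) underS_Field by fast
  have \<gamma>_t0: "\<gamma> \<in> underS K (b t0)"
    using t0 unfolding Q_def by blast
  have "b s \<in> underS K (b t0)" if s: "s \<in> underS T t0" for s
  proof -
    have "s \<notin> Q"
    proof
      assume "s \<in> Q"
      then have "t0 \<in> underS T t0"
        using T.le_underS_trans[OF t0_least s] by blast
      then show False
        by (simp add: underS_notIn)
    qed
    moreover have "s \<in> Field T"
      using s underS_Field by fast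
    ultimately have "b s \<in> Field K" "\<gamma> \<notin> underS K (b s)"
      using b unfolding Q_def by auto
    then have "(b s, \<gamma>) \<in> K"
      using K.not_underS_le[OF \<gamma>_K] by blast
    then show ?thesis
      by (rule K.le_underS_trans[OF _ \<gamma>_t0])
  qed
  moreover have "t0 \<in> Field T"
    using t0 unfolding Q_def by simp
  ultimately have "t0 \<in> record_points K T b"
    unfolding record_points_def by simp
  then show ?thesis
    using that \<gamma>_t0 by blast
qed

lemma record_points_initial_segment:
  assumes K: "wo_rel K" and T: "wo_rel T"
    and t0: "t0 \<in> Field T" "\<gamma> \<in> underS K (b t0)"
  shows "{x \<in> b ` record_points K T b. (x, \<gamma>) \<in> K} \<subseteq> b ` underS T t0"
proof clarify
  fix s assume s: "s \<in> record_points K T b" "(b s, \<gamma>) \<in> K"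
  have "s \<in> underS T t0"
  proof (rule ccontr)
    assume "s \<notin> underS T t0"
    moreover have "s \<in> Field T"
      using s(1) unfolding record_points_def by blast
    ultimately have "(t0, s) \<in> T"
      using wo_rel.not_underS_le[OF T] t0(1) by blast
    then have "s = t0 \<or> t0 \<in> underS T s"
      unfolding underS_def by blast
    then have "\<gamma> \<in> underS K (b s)"
    proof
      assume "t0 \<in> underS T s"
      then have "b t0 \<in> underS K (b s)"
        using s(1) unfolding record_points_def by blast
      then show ?thesis
        using wo_rel.underS_trans[OF K t0(2)] by blast
    qed (use t0(2) in blast)
    then show False
      using wo_rel.le_underS_trans[OF K s(2)] underS_notIn by fast
  qed
  then show "b s \<in> b ` underS T t0"
    by blast
qed

lemma record_points_cofinal_small:
  assumes K: "wo_rel K" and T: "Card_order T"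
    and b: "b ` Field T \<subseteq> Field K" and t: "t \<in> Field T" "\<gamma> \<in> underS K (b t)"
  shows "\<exists>x\<in>b ` record_points K T b. \<gamma> \<in> underS K x"
    and "|{x \<in> b ` record_points K T b. (x, \<gamma>) \<in> K}| <o T"
proof -
  obtain t0 where t0: "t0 \<in> record_points K T b" "\<gamma> \<in> underS K (b t0)"
    using record_points_least_above[OF K Card_order_wo_rel[OF T] b t] by blast
  then show "\<exists>x\<in>b ` record_points K T b. \<gamma> \<in> underS K x"
    by blast
  have t0_T: "t0 \<in> Field T"
    using t0(1) unfolding record_points_def by blast
  have "|{x \<in> b ` record_points K T b. (x, \<gamma>) \<in> K}| \<le>o |underS T t0|"
    using ordLeq_transitive[OF card_of_mono1[OF record_points_initial_segment[where b = b, OF K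
          Card_order_wo_rel[OF T] t0_T t0(2)]] card_of_image] .
  also have "|underS T t0| <o T"
    by (rule card_of_underS[OF T t0_T])
  finally show "|{x \<in> b ` record_points K T b. (x, \<gamma>) \<in> K}| <o T" .
qed

lemma cofinal_sub_indexed:
  assumes K: "wo_rel K" and T: "Card_order T"
    and C0: "cofinal_sub K C0 \<alpha>" "|C0| =o T"
    and B: "cofinal_sub K B \<alpha>"
  obtains b where "b ` Field T \<subseteq> B" "\<forall>t\<in>Field T. underS K (b t) \<noteq> {}"
    "\<forall>\<gamma>\<in>underS K \<alpha>. \<exists>t\<in>Field T. \<gamma> \<in> underS K (b t)"
proof -
  have "|Field T| =o |C0|"
    using ordIso_transitive[OF card_of_Field_ordIso[OF T] ordIso_symmetric[OF C0(2)]] .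
  then obtain c where c: "bij_betw c (Field T) C0"
    unfolding card_of_ordIso[symmetric] by blast
  have "\<exists>\<beta>\<in>B. c t \<in> underS K \<beta>" if "t \<in> Field T" for t
  proof -
    have "c t \<in> underS K \<alpha>"
      using C0(1) bij_betwE[OF c] that unfolding cofinal_sub_def by blast
    then show ?thesis
      using B unfolding cofinal_sub_def sup_is_iff by blast
  qed
  then obtain b where b: "\<And>t. t \<in> Field T \<Longrightarrow> b t \<in> B \<and> c t \<in> underS K (b t)"
    by metis
  have "\<exists>t\<in>Field T. \<gamma> \<in> underS K (b t)" if \<gamma>: "\<gamma> \<in> underS K \<alpha>" for \<gamma>
  proof -
    obtain x where "x \<in> C0" "\<gamma> \<in> underS K x"
      using C0(1) \<gamma> unfolding cofinal_sub_def sup_is_iff by blast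
    then obtain t where t: "t \<in> Field T" "\<gamma> \<in> underS K (c t)"
      using bij_betw_imp_surj_on[OF c] by blast
    then have "\<gamma> \<in> underS K (b t)"
      using wo_rel.underS_trans[OF K] b[OF t(1)] by blast
    then show ?thesis
      using t(1) by blast
  qed
  moreover have "\<forall>t\<in>Field T. underS K (b t) \<noteq> {}"
    using b by blast
  ultimately show ?thesis
    using that b by blast
qed

lemma cofinal_sub_thin:
  assumes K: "wo_rel K" and T: "Card_order T"
    and C0: "cofinal_sub K C0 \<alpha>" "|C0| =o T"
    and B: "cofinal_sub K B \<alpha>"
  obtains B0 where "B0 \<subseteq> B" "cofinal_sub K B0 \<alpha>" "|B0| \<le>o T" "\<forall>\<beta>\<in>B0. underS K \<beta> \<noteq> {}"
    "\<forall>\<gamma>\<in>underS K \<alpha>. |{\<beta>\<in>B0. (\<beta>, \<gamma>) \<in> K}| <o T"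
proof -
  obtain b where b: "b ` Field T \<subseteq> B" "\<forall>t\<in>Field T. underS K (b t) \<noteq> {}"
    and below_b: "\<forall>\<gamma>\<in>underS K \<alpha>. \<exists>t\<in>Field T. \<gamma> \<in> underS K (b t)"
    by (rule cofinal_sub_indexed[OF K T C0 B])
  define B0 where "B0 = b ` record_points K T b"
  have R: "record_points K T b \<subseteq> Field T"
    unfolding record_points_def by blast
  have B0_B: "B0 \<subseteq> B"
    using R b(1) unfolding B0_def by blast
  have "|B0| \<le>o |Field T|"
    unfolding B0_def using ordLeq_transitive[OF card_of_image card_of_mono1[OF R]] .
  then have B0_T: "|B0| \<le>o T"
    using ordLeq_ordIso_trans[OF _ card_of_Field_ordIso[OF T]] by blast
  have "B \<subseteq> Field K"
    using B underS_Field[of _ K \<alpha>] unfolding cofinal_sub_def by blast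
  then have b_K: "b ` Field T \<subseteq> Field K"
    using b(1) by blast
  have "sup_is K B0 \<alpha>"
    unfolding sup_is_iff B0_def using below_b record_points_cofinal_small(1)[OF K T b_K] by blast
  then have "cofinal_sub K B0 \<alpha>"
    using B B0_B unfolding cofinal_sub_def by blast
  moreover have "\<forall>\<beta>\<in>B0. underS K \<beta> \<noteq> {}"
    using R b(2) unfolding B0_def by blast
  moreover have "\<forall>\<gamma>\<in>underS K \<alpha>. |{\<beta>\<in>B0. (\<beta>, \<gamma>) \<in> K}| <o T"
    unfolding B0_def using below_b record_points_cofinal_small(2)[OF K T b_K] by blast
  ultimately show ?thesis
    using that B0_B B0_T by blast
qed

lemma sup_is_large_subset:
  assumes K: "wo_rel K"
    and B0: "B0 \<subseteq> Field K" "\<forall>\<gamma>\<in>underS K \<alpha>. |{\<beta>\<in>B0. (\<beta>, \<gamma>) \<in> K}| <o T"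
    and Z: "Z \<subseteq> B0" "|Z| =o T"
  shows "sup_is K Z \<alpha>"
  unfolding sup_is_iff
proof
  fix \<gamma> assume \<gamma>: "\<gamma> \<in> underS K \<alpha>"
  show "\<exists>\<beta>\<in>Z. \<gamma> \<in> underS K \<beta>"
  proof (rule ccontr)
    assume "\<not> ?thesis"
    moreover have "\<gamma> \<in> Field K"
      using \<gamma> underS_Field by fast
    ultimately have "Z \<subseteq> {\<beta>\<in>B0. (\<beta>, \<gamma>) \<in> K}"
      using wo_rel.not_underS_le[OF K] Z(1) B0(1) by blast
    then have "|Z| <o T"
      using ordLeq_ordLess_trans[OF card_of_mono1] B0(2) \<gamma> by blast
    then show False
      using Z(2) not_ordLess_ordIso by blast
  qed
qed

lemma A_set_E_cof_thin:
  assumes K: "wo_rel K" and T: "Card_order T"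
    and \<alpha>: "\<alpha> \<in> A_set K d \<inter> E_cof K T" and B: "cofinal_sub K B \<alpha>"
  obtains \<eta> B' where "\<eta> \<in> underS K \<alpha>" "B' \<subseteq> B" "cofinal_sub K B' \<alpha>" "inj_on (d \<eta>) B'" "|B'| =o T"
    "\<forall>\<beta>\<in>B'. underS K \<beta> \<noteq> {}" "\<forall>\<gamma>\<in>underS K \<alpha>. |{\<beta>\<in>B'. (\<beta>, \<gamma>) \<in> K}| <o T"
proof -
  obtain C0 where C0: "cofinal_sub K C0 \<alpha>" "|C0| =o T"
    and cf_least: "\<And>B'. cofinal_sub K B' \<alpha> \<Longrightarrow> T \<le>o |B'|"
    using \<alpha> unfolding E_cof_def cf_is_def by blast
  obtain B0 where B0: "B0 \<subseteq> B" "cofinal_sub K B0 \<alpha>" "|B0| \<le>o T" "\<forall>\<beta>\<in>B0. underS K \<beta> \<noteq> {}"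
    "\<forall>\<gamma>\<in>underS K \<alpha>. |{\<beta>\<in>B0. (\<beta>, \<gamma>) \<in> K}| <o T"
    by (rule cofinal_sub_thin[OF K T C0 B])
  obtain \<eta> B' where \<eta>: "\<eta> \<in> underS K \<alpha>" and B': "B' \<subseteq> B0" "cofinal_sub K B' \<alpha>" "inj_on (d \<eta>) B'"
    using \<alpha> B0(2) unfolding A_set_def by blast
  have "|B'| =o T"
    using ordLeq_transitive[OF card_of_mono1[OF B'(1)] B0(3)] cf_least[OF B'(2)]
    unfolding ordIso_iff_ordLeq by blast
  moreover have "|{\<beta>\<in>B'. (\<beta>, \<gamma>) \<in> K}| <o T" if "\<gamma> \<in> underS K \<alpha>" for \<gamma>
  proof -
    have "{\<beta>\<in>B'. (\<beta>, \<gamma>) \<in> K} \<subseteq> {\<beta>\<in>B0. (\<beta>, \<gamma>) \<in> K}"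
      using B'(1) by blast
    then show ?thesis
      using ordLeq_ordLess_trans[OF card_of_mono1] B0(5) that by blast
  qed
  ultimately show ?thesis
    using that \<eta> B' B0(1,4) by blast
qed

section \<open>Guessing along a covering family\<close>

lemma m_covers_pullback:
  assumes H: "m_covers L T C H"
    and u: "inj_on u B" "u ` B \<subseteq> Field L" and B: "|B| =o T"
    and v: "v \<in> B \<rightarrow> Field L"
  obtains h where "h \<in> H" "|{\<beta>\<in>B. v \<beta> \<in> h (u \<beta>)}| =o T"
proof -
  have iso: "|A| =o |u ` A|" if "A \<subseteq> B" for A
    using inj_on_imp_bij_betw[OF inj_on_subset[OF u(1) that]] unfolding card_of_ordIso[symmetric] by blast
  define g where "g \<xi> = v (the_inv_into B u \<xi>)" for \<xi>
  have "|u ` B| =o T"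
    using ordIso_transitive[OF ordIso_symmetric[OF iso] B] by blast
  moreover have "g \<in> u ` B \<rightarrow> Field L"
    using v the_inv_into_f_f[OF u(1)] unfolding g_def by auto
  ultimately obtain h where h: "h \<in> H" "|{\<xi>\<in>u ` B. g \<xi> \<in> h \<xi>}| =o T"
    using H u(2) unfolding m_covers_def by blast
  have eq: "{\<xi>\<in>u ` B. g \<xi> \<in> h \<xi>} = u ` {\<beta>\<in>B. v \<beta> \<in> h (u \<beta>)}"
    using the_inv_into_f_f[OF u(1)] unfolding g_def by auto
  have "|{\<beta>\<in>B. v \<beta> \<in> h (u \<beta>)}| =o T"
    using ordIso_transitive[OF iso h(2)[unfolded eq]] by blast
  then show ?thesis
    using that h(1) by blast
qed

lemma m_equals_enumeration:
  assumes "m_equals L T C" "Card_order L"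
  obtains h where "m_covers L T C (h ` Field L)"
proof -
  obtain H where H: "m_covers L T C H" "|H| =o L"
    using assms(1) unfolding m_equals_def by blast
  have "|Field L| =o |H|"
    using ordIso_transitive[OF card_of_Field_ordIso[OF assms(2)] ordIso_symmetric[OF H(2)]] .
  then obtain h where "bij_betw h (Field L) H"
    unfolding card_of_ordIso[symmetric] by blast
  then show ?thesis
    using that H(1) unfolding bij_betw_def by blast
qed

definition guess_family ::
  "'k rel \<Rightarrow> 'j set \<Rightarrow> ('k \<times> 'j \<Rightarrow> 'k) \<Rightarrow> ('j \<Rightarrow> 'x \<Rightarrow> 'y set) \<Rightarrow> ('k \<Rightarrow> 'k \<Rightarrow> 'x)
    \<Rightarrow> ('k \<Rightarrow> 'k \<Rightarrow> 'y) \<Rightarrow> 'k \<Rightarrow> 'k \<Rightarrow> 'k set"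
  where "guess_family K J p h d e i \<beta> =
    {\<gamma> \<in> underS K \<beta>. \<exists>\<eta>\<in>Field K. \<exists>j\<in>J. i = p (\<eta>, j) \<and> e \<beta> \<gamma> \<in> h j (d \<eta> \<beta>)}"

lemma guess_family_small:
  assumes p: "inj_on p (Field K \<times> J)"
    and e: "\<And>\<beta>. inj_on (e \<beta>) (underS K \<beta>)"
    and H: "m_covers L T C (h ` J)"
    and d: "d \<in> Field K \<rightarrow> Field K \<rightarrow> Field L"
    and C: "Card_order C" "Field C \<noteq> {}"
  shows "guess_family K J p h d e i \<in> Field K \<rightarrow> small_subsets (Field K) C"
proof
  fix \<beta> assume \<beta>: "\<beta> \<in> Field K"
  have "|guess_family K J p h d e i \<beta>| <o C"
  proof (cases "i \<in> p ` (Field K \<times> J)")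
    case True
    then obtain \<eta> j where \<eta>j: "\<eta> \<in> Field K" "j \<in> J" "i = p (\<eta>, j)"
      by blast
    have "guess_family K J p h d e i \<beta> = {\<gamma> \<in> underS K \<beta>. e \<beta> \<gamma> \<in> h j (d \<eta> \<beta>)}"
      unfolding guess_family_def using \<eta>j inj_onD[OF p] by auto
    then have "inj_on (e \<beta>) (guess_family K J p h d e i \<beta>)"
      and "e \<beta> ` guess_family K J p h d e i \<beta> \<subseteq> h j (d \<eta> \<beta>)"
      using inj_on_subset[OF e] by auto
    then have "|guess_family K J p h d e i \<beta>| \<le>o |h j (d \<eta> \<beta>)|"
      unfolding card_of_ordLeq[symmetric] by blast
    moreover have "h j \<in> Field L \<rightarrow>\<^sub>E small_subsets (Field L) C" "d \<eta> \<beta> \<in> Field L"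
      using H \<eta>j(1,2) d \<beta> unfolding m_covers_def by blast+
    then have "|h j (d \<eta> \<beta>)| <o C"
      unfolding small_subsets_def by blast
    ultimately show ?thesis
      by (rule ordLeq_ordLess_trans)
  next
    case False
    then have "guess_family K J p h d e i \<beta> = {}"
      unfolding guess_family_def by blast
    then show ?thesis
      using card_of_empty_ordLess[OF C] by simp
  qed
  moreover have "guess_family K J p h d e i \<beta> \<subseteq> Field K"
    unfolding guess_family_def using underS_Field by fast
  ultimately show "guess_family K J p h d e i \<beta> \<in> small_subsets (Field K) C"
    unfolding small_subsets_def by blast
qed

lemma guess_family_guesses:
  assumes K: "wo_rel K" and T: "Card_order T"
    and H: "m_covers L T C (h ` J)"
    and d: "d \<in> Field K \<rightarrow> Field K \<rightarrow> Field L"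
    and e: "\<And>\<beta>. e \<beta> ` underS K \<beta> \<subseteq> Field L"
    and \<alpha>: "\<alpha> \<in> A_set K d \<inter> E_cof K T"
    and closed: "\<forall>\<eta>\<in>underS K \<alpha>. \<forall>j\<in>J. p (\<eta>, j) \<in> underS K \<alpha>"
    and f: "\<forall>\<beta>\<in>underS K \<alpha>. underS K \<beta> \<noteq> {} \<longrightarrow> f \<beta> \<in> underS K \<beta>"
    and B: "cofinal_sub K B \<alpha>"
  shows "\<exists>i\<in>underS K \<alpha>. sup_is K {\<beta>\<in>B. f \<beta> \<in> guess_family K J p h d e i \<beta>} \<alpha>"
proof -
  obtain \<eta> B' where \<eta>: "\<eta> \<in> underS K \<alpha>" and B': "B' \<subseteq> B" "cofinal_sub K B' \<alpha>" "inj_on (d \<eta>) B'"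
    "|B'| =o T" "\<forall>\<beta>\<in>B'. underS K \<beta> \<noteq> {}" "\<forall>\<gamma>\<in>underS K \<alpha>. |{\<beta>\<in>B'. (\<beta>, \<gamma>) \<in> K}| <o T"
    by (rule A_set_E_cof_thin[OF K T \<alpha> B])
  have B'_K: "B' \<subseteq> Field K"
    using B'(2) underS_Field[of _ K \<alpha>] unfolding cofinal_sub_def by blast
  have \<eta>_K: "\<eta> \<in> Field K"
    using \<eta> underS_Field by fast
  have f_B': "f \<beta> \<in> underS K \<beta>" if "\<beta> \<in> B'" for \<beta>
    using f B'(2,5) that unfolding cofinal_sub_def by blast
  have "d \<eta> ` B' \<subseteq> Field L"
    using d \<eta>_K B'_K by blast
  moreover have "(\<lambda>\<beta>. e \<beta> (f \<beta>)) \<in> B' \<rightarrow> Field L"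
    using e f_B' by blast
  ultimately obtain h' where "h' \<in> h ` J" and Z: "|{\<beta>\<in>B'. e \<beta> (f \<beta>) \<in> h' (d \<eta> \<beta>)}| =o T"
    by (rule m_covers_pullback[OF H B'(3) _ B'(4)])
  then obtain j where j: "j \<in> J" "h' = h j"
    by blast
  have "sup_is K {\<beta>\<in>B'. e \<beta> (f \<beta>) \<in> h j (d \<eta> \<beta>)} \<alpha>"
    using sup_is_large_subset[OF K B'_K B'(6) _ Z[unfolded j(2)]] by blast
  moreover have "{\<beta>\<in>B'. e \<beta> (f \<beta>) \<in> h j (d \<eta> \<beta>)} \<subseteq> {\<beta>\<in>B. f \<beta> \<in> guess_family K J p h d e (p (\<eta>, j)) \<beta>}"
    unfolding guess_family_def using B'(1) f_B' \<eta>_K j(1) by blast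
  ultimately have "sup_is K {\<beta>\<in>B. f \<beta> \<in> guess_family K J p h d e (p (\<eta>, j)) \<beta>} \<alpha>"
    unfolding sup_is_def by blast
  moreover have "p (\<eta>, j) \<in> underS K \<alpha>"
    using closed \<eta> j(1) by blast
  ultimately show ?thesis
    by blast
qed

lemma J_idealI:
  assumes "S \<subseteq> Field K" "club K D" "\<And>i. i \<in> Field K \<Longrightarrow> F i \<in> Field K \<rightarrow> small_subsets (Field K) C"
    and "\<And>\<alpha> f B. \<alpha> \<in> S \<Longrightarrow> \<alpha> \<in> D \<Longrightarrow> \<forall>\<beta>\<in>underS K \<alpha>. underS K \<beta> \<noteq> {} \<longrightarrow> f \<beta> \<in> underS K \<beta> \<Longrightarrow>
      cofinal_sub K B \<alpha> \<Longrightarrow> \<exists>i\<in>underS K \<alpha>. sup_is K {\<beta>\<in>B. f \<beta> \<in> F i \<beta>} \<alpha>"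
  shows "S \<in> J_ideal K C"
  unfolding J_ideal_def using assms by blast

theorem lemma3p5:
  fixes L :: "'a rel" and T :: "'t rel" and C :: "'c rel"
    and d :: "'a set \<Rightarrow> 'a set \<Rightarrow> 'a"
  assumes "Card_order L" and "\<not> finite (Field L)"
    and "Card_order T" and "\<not> finite (Field T)" and "regularCard T"
    and "Card_order C" and "card (Field C) = 2 \<or> \<not> finite (Field C)"
    and "m_equals L T C"
    and "d \<in> Field (cardSuc L) \<rightarrow> Field (cardSuc L) \<rightarrow> Field L"
  shows "A_set (cardSuc L) d \<inter> E_cof (cardSuc L) T \<in> J_ideal (cardSuc L) C"
proof -
  let ?K = "cardSuc L"
  have K: "wo_rel ?K"
    by (rule Card_order_wo_rel[OF cardSuc_Card_order[OF assms(1)]])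
  obtain p D where p: "inj_on p (Field ?K \<times> Field L)" and D: "club ?K D"
    "\<forall>\<delta>\<in>D. \<forall>\<eta>\<in>underS ?K \<delta>. \<forall>j\<in>Field L. p (\<eta>, j) \<in> underS ?K \<delta>"
    by (rule cardSuc_pairing_club[OF assms(1,2)])
  obtain h where h: "m_covers L T C (h ` Field L)"
    by (rule m_equals_enumeration[OF assms(8,1)])
  obtain e where e: "\<And>\<beta>. inj_on (e \<beta>) (underS ?K \<beta>)" "\<And>\<beta>. e \<beta> ` underS ?K \<beta> \<subseteq> Field L"
    using cardSuc_underS_embeddings[OF assms(1)] by blast
  have C: "Field C \<noteq> {}"
    using assms(7) by auto
  show ?thesis
  proof (rule J_idealI[of _ _ D "guess_family ?K (Field L) p h d e"])
    show "A_set ?K d \<inter> E_cof ?K T \<subseteq> Field ?K"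
      unfolding A_set_def by blast
    show "guess_family ?K (Field L) p h d e i \<in> Field ?K \<rightarrow> small_subsets (Field ?K) C" for i
      by (rule guess_family_small[OF p e(1) h assms(9,6) C])
    show "\<exists>i\<in>underS ?K \<alpha>. sup_is ?K {\<beta>\<in>B. f \<beta> \<in> guess_family ?K (Field L) p h d e i \<beta>} \<alpha>"
      if "\<alpha> \<in> A_set ?K d \<inter> E_cof ?K T" "\<alpha> \<in> D"
        "\<forall>\<beta>\<in>underS ?K \<alpha>. underS ?K \<beta> \<noteq> {} \<longrightarrow> f \<beta> \<in> underS ?K \<beta>" "cofinal_sub ?K B \<alpha>" for \<alpha> f B
      using guess_family_guesses[OF K assms(3) h assms(9) e(2) that(1) _ that(3,4)] D(2) that(2) by blast
  qed (rule D(1))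
qed

end
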